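(* Assume Assumption 1 and Assumption 2 with $\delta>1/10$. For any distinct $u,u_1,u_2\in L$, as $n_R\to\infty$, $$\Pr[(u,u_1)\in E,\ (u,u_2)\in E\mid S_L,S_R]=\left(1+\frac{M_{R1}M_{R3}}{M_{R2}^2}\cdot\frac1{w_u}\right)p_{uu_1}p_{uu_2}\,(1+o(1)),$$ where $p_{xy}=\frac{M_{R2}}{M_{R1}^2}\cdot\frac{w_xw_y}{n_R}$.
   Context: Model: left nodes $L$ ($|L|=n_L$), right nodes $R$ ($|R|=n_R$), weight sequences $S_L=(w_u)_{u\in L}$, $S_R=(w_v)_{v\in R}$ of positive reals; $M_{Lk}=\frac1{n_L}\sum_{u\in L}w_u^k$, $M_{Rk}=\frac1{n_R}\sum_{v\in R}w_v^k$. The random bipartite graph $G_b=(L\sqcup R,E_b)$ contains each edge $(u,v)$, $u\in L$, $v\in R$, independently with probability $\min\left(\frac{w_uw_v}{n_RM_{R1}},1\right)$. The projected graph is $G=(L,E)$ with $(u,u')\in E$ for distinct $u,u'\in L$ iff there is $z\in R$ with $(u,z),(u',z)\in E_b$. Assumption 1: $\frac{w_uw_v}{n_RM_{R1}}\le1$ for all $u\in L,v\in R$. Assumption 2 (parameter $\delta>0$), as $n_L,n_R\to\infty$: $\max(S_L\cup S_R)=O(n_R^{1/2-\delta})$, $\min S_L=\Omega(1)$, $M_{R2}=O(M_{R1}^2)$, $M_{R4}=O(n_R^{1-2\delta})$. *)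

theory Defs
  imports "HOL-Probability.Probability" "HOL-Library.Landau_Symbols"
begin

text \<open>Nodes: L = {..<nL}, R = {..<nR}; weights are functions on node indices.\<close>

definition moment :: "nat \<Rightarrow> (nat \<Rightarrow> real) \<Rightarrow> nat \<Rightarrow> real" where
  "moment n w j = (\<Sum>i<n. w i ^ j) / real n"

definition edge_prob :: "nat \<Rightarrow> (nat \<Rightarrow> real) \<Rightarrow> (nat \<Rightarrow> real) \<Rightarrow> nat \<Rightarrow> nat \<Rightarrow> real" where
  "edge_prob nR wL wR u v = min (wL u * wR v / (real nR * moment nR wR 1)) 1"

definition bip_graph :: "nat \<Rightarrow> nat \<Rightarrow> (nat \<Rightarrow> real) \<Rightarrow> (nat \<Rightarrow> real) \<Rightarrow> (nat \<times> nat \<Rightarrow> bool) pmf" where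
  "bip_graph nL nR wL wR =
     Pi_pmf ({..<nL} \<times> {..<nR}) False (\<lambda>(u, v). bernoulli_pmf (edge_prob nR wL wR u v))"

definition proj_edge :: "nat \<Rightarrow> (nat \<times> nat \<Rightarrow> bool) \<Rightarrow> nat \<Rightarrow> nat \<Rightarrow> bool" where
  "proj_edge nR Eb u u' \<longleftrightarrow> u \<noteq> u' \<and> (\<exists>z<nR. Eb (u, z) \<and> Eb (u', z))"

definition p_proj :: "nat \<Rightarrow> (nat \<Rightarrow> real) \<Rightarrow> real \<Rightarrow> real \<Rightarrow> real" where
  "p_proj nR wR wx wy = moment nR wR 2 / (moment nR wR 1)^2 * (wx * wy / real nR)"

end

theory Submission
  imports Defs
begin

(*
  Let a_z, b_z, c_z be the probabilities of the edges (u,z), (u1,z), (u2,z). Independence over the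
  right nodes z gives the exact value
    P = 1 - \<Prod>(1 - a b) - \<Prod>(1 - a c) + \<Prod>(1 - a b - a c + a b c),
  and an induction over z shows (T + X Y)(1 - m - 2 (X + Y)) \<le> P \<le> T + X Y, where X = \<Sum> a b,
  Y = \<Sum> a c, T = \<Sum> a b c and m = max a. Now X and Y are the two factors p_uu1, p_uu2 and T is the
  correction term of the target, so the target is exactly T + X Y; moreover m \<le> \<surd>e and X, Y \<le> e
  for e = W\<^sup>2 M_R2 / (M_R1\<^sup>2 n_R), W the maximal weight, and Assumption 2 makes e = O(n_R^(-2\<delta>)).
*)

lemma prod_one_minus_bounds:
  fixes x :: "'z \<Rightarrow> real"
  assumes "finite Z" and "\<And>z. z \<in> Z \<Longrightarrow> 0 \<le> x z \<and> x z \<le> 1"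
  shows "1 - (\<Sum>z\<in>Z. x z) \<le> (\<Prod>z\<in>Z. 1 - x z)
       \<and> (\<Prod>z\<in>Z. 1 - x z) \<le> 1 - (\<Sum>z\<in>Z. x z) + (\<Sum>z\<in>Z. x z)\<^sup>2"
  using assms
proof (induction rule: finite_induct)
  case (insert z Z)
  let ?\<alpha> = "\<Prod>z\<in>Z. 1 - x z" and ?X = "\<Sum>z\<in>Z. x z"
  have x: "0 \<le> x z" "x z \<le> 1" and X: "0 \<le> ?X"
    using insert.prems by (auto intro: sum_nonneg)
  have \<alpha>: "0 \<le> ?\<alpha>" "?\<alpha> \<le> 1"
    using insert.prems by (auto intro: prod_nonneg prod_le_1)
  have lower: "1 - ?X \<le> ?\<alpha>" and upper: "?\<alpha> \<le> 1 - ?X + ?X\<^sup>2"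
    using insert by auto
  have "?\<alpha> * x z \<le> x z"
    using \<alpha> x by (simp add: mult_left_le_one_le)
  moreover have "x z * (1 - ?\<alpha> - 2 * ?X - x z) \<le> 0"
    using x X lower by (intro mult_nonneg_nonpos) auto
  ultimately show ?case
    using insert.hyps lower upper by (simp add: algebra_simps power2_eq_square)
qed simp

lemma prod_one_minus_Int_bounds:
  fixes x y t :: "'z \<Rightarrow> real"
  assumes "finite Z"
    and xyt: "\<And>z. z \<in> Z \<Longrightarrow> 0 \<le> t z \<and> t z \<le> x z \<and> t z \<le> y z \<and> x z + y z - t z \<le> 1"
  shows "0 \<le> (\<Prod>z\<in>Z. 1 - x z - y z + t z)"
    and "(\<Prod>z\<in>Z. 1 - x z - y z + t z) \<le> (\<Prod>z\<in>Z. 1 - x z)"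
    and "(\<Prod>z\<in>Z. 1 - x z - y z + t z) \<le> (\<Prod>z\<in>Z. 1 - y z)"
    and "1 - (\<Sum>z\<in>Z. x z) - (\<Sum>z\<in>Z. y z) \<le> (\<Prod>z\<in>Z. 1 - x z - y z + t z)"
proof -
  have nonneg: "0 \<le> 1 - x z - y z + t z" if "z \<in> Z" for z
    using xyt[OF that] by linarith
  then show "0 \<le> (\<Prod>z\<in>Z. 1 - x z - y z + t z)"
    by (rule prod_nonneg)
  show "(\<Prod>z\<in>Z. 1 - x z - y z + t z) \<le> (\<Prod>z\<in>Z. 1 - x z)"
    "(\<Prod>z\<in>Z. 1 - x z - y z + t z) \<le> (\<Prod>z\<in>Z. 1 - y z)"
    using xyt nonneg by (auto intro!: prod_mono)
  have "0 \<le> (\<Sum>z\<in>Z. t z)"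
    using xyt by (auto intro: sum_nonneg)
  moreover have "1 - (\<Sum>z\<in>Z. x z + y z - t z) \<le> (\<Prod>z\<in>Z. 1 - (x z + y z - t z))"
    using prod_one_minus_bounds[OF assms(1), of "\<lambda>z. x z + y z - t z"] xyt by force
  ultimately show "1 - (\<Sum>z\<in>Z. x z) - (\<Sum>z\<in>Z. y z) \<le> (\<Prod>z\<in>Z. 1 - x z - y z + t z)"
    by (simp add: sum_subtractf sum.distrib algebra_simps)
qed

lemma inclusion_exclusion_step:
  fixes \<alpha> \<beta> \<gamma> X Y T x y t m :: real
  assumes xyt: "0 \<le> t" "t \<le> x" "t \<le> y" "x * y \<le> m * t"
    and XY: "0 \<le> X" "0 \<le> Y" "1 - \<alpha> \<le> X" "X - X\<^sup>2 \<le> 1 - \<alpha>" "1 - \<beta> \<le> Y" "Y - Y\<^sup>2 \<le> 1 - \<beta>"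
    and \<gamma>: "0 \<le> \<gamma>" "\<gamma> \<le> \<alpha>" "\<gamma> \<le> \<beta>" "\<gamma> \<le> 1" "1 - X - Y \<le> \<gamma>"
    and P: "0 \<le> 1 - \<alpha> - \<beta> + \<gamma>" "1 - \<alpha> - \<beta> + \<gamma> \<le> T + X * Y"
      "T + X * Y - m * T - 2 * (X + Y) * (T + X * Y) \<le> 1 - \<alpha> - \<beta> + \<gamma>"
  defines "P' \<equiv> 1 - \<alpha> * (1 - x) - \<beta> * (1 - y) + \<gamma> * (1 - x - y + t)"
    and "X' \<equiv> X + x" and "Y' \<equiv> Y + y" and "T' \<equiv> T + t"
  shows "0 \<le> P'" and "P' \<le> T' + X' * Y'"
    and "T' + X' * Y' - m * T' - 2 * (X' + Y') * (T' + X' * Y') \<le> P'"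
proof -
  define P U where "P = 1 - \<alpha> - \<beta> + \<gamma>" and "U = T + X * Y"
  have P': "P' = P + x * (1 - \<beta> - P) + y * (1 - \<alpha> - P) + t * \<gamma>"
    unfolding P'_def P_def by (simp add: algebra_simps)
  have "0 \<le> x * (1 - \<beta> - P)" "0 \<le> y * (1 - \<alpha> - P)" "0 \<le> t * \<gamma>"
    using xyt \<gamma> unfolding P_def by simp_all
  then show "0 \<le> P'"
    unfolding P' P_def using P by linarith
  have "x * (1 - \<beta> - P) \<le> x * Y" "y * (1 - \<alpha> - P) \<le> y * X"
    using xyt XY P unfolding P_def by (auto intro!: mult_left_mono)
  moreover have "t * \<gamma> \<le> t" "0 \<le> x * y"
    using xyt \<gamma> by (simp_all add: mult_left_le)
  ultimately have "P' \<le> U + x * Y + y * X + t + x * y"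
    unfolding P' P_def U_def using P by linarith
  also have "\<dots> = T' + X' * Y'"
    unfolding U_def T'_def X'_def Y'_def by (simp add: algebra_simps)
  finally show "P' \<le> T' + X' * Y'" .
  have "x * (Y - Y\<^sup>2 - P) \<le> x * (1 - \<beta> - P)" "y * (X - X\<^sup>2 - P) \<le> y * (1 - \<alpha> - P)"
    "t * (1 - X - Y) \<le> t * \<gamma>" "(x + y) * P \<le> (x + y) * U"
    using xyt XY \<gamma> P unfolding P_def U_def by (auto intro!: mult_left_mono)
  \<comment> \<open>after these estimates the remaining gap is m t - x y plus the following terms\<close>
  moreover have "0 \<le> x * Y * (2 * X + Y)" "0 \<le> y * X * (X + 2 * Y)" "0 \<le> (X + Y) * t"
    "0 \<le> 2 * (X + Y) * (x * y)" "0 \<le> (x + y) * (U + 2 * (t + x * Y + y * X + x * y))"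
    using xyt XY P unfolding U_def by auto
  ultimately show "T' + X' * Y' - m * T' - 2 * (X' + Y') * (T' + X' * Y') \<le> P'"
    using xyt P unfolding P' P_def U_def T'_def X'_def Y'_def by (simp add: algebra_simps power2_eq_square)
qed

text \<open>Here x z, y z, t z are the probabilities of events E_z, F_z and E_z \<inter> F_z, independent
  across z, and P is the probability that some E_z and some F_z occur.\<close>

lemma inclusion_exclusion_product_bounds:
  fixes x y t :: "'z \<Rightarrow> real" and m :: real
  assumes Z: "finite Z" and m: "0 \<le> m"
    and xyt: "\<And>z. z \<in> Z \<Longrightarrow>
      0 \<le> t z \<and> t z \<le> x z \<and> t z \<le> y z \<and> x z + y z - t z \<le> 1 \<and> x z * y z \<le> m * t z"
  defines "P \<equiv> 1 - (\<Prod>z\<in>Z. 1 - x z) - (\<Prod>z\<in>Z. 1 - y z) + (\<Prod>z\<in>Z. 1 - x z - y z + t z)"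
    and "X \<equiv> \<Sum>z\<in>Z. x z" and "Y \<equiv> \<Sum>z\<in>Z. y z" and "T \<equiv> \<Sum>z\<in>Z. t z"
  shows "P \<le> T + X * Y" and "(T + X * Y) * (1 - m - 2 * (X + Y)) \<le> P"
proof -
  have invariant: "0 \<le> P \<and> P \<le> T + X * Y \<and> T + X * Y - m * T - 2 * (X + Y) * (T + X * Y) \<le> P"
    unfolding P_def X_def Y_def T_def using Z xyt
  proof (induction rule: finite_induct)
    case (insert z Z)
    have x01: "0 \<le> x z' \<and> x z' \<le> 1" and y01: "0 \<le> y z' \<and> y z' \<le> 1"
      and xyt': "0 \<le> t z' \<and> t z' \<le> x z' \<and> t z' \<le> y z' \<and> x z' + y z' - t z' \<le> 1"
      if "z' \<in> Z" for z'
      using insert.prems[of z'] that by auto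
    let ?\<alpha> = "\<Prod>z\<in>Z. 1 - x z" and ?\<beta> = "\<Prod>z\<in>Z. 1 - y z"
      and ?\<gamma> = "\<Prod>z\<in>Z. 1 - x z - y z + t z"
    let ?X = "\<Sum>z\<in>Z. x z" and ?Y = "\<Sum>z\<in>Z. y z" and ?T = "\<Sum>z\<in>Z. t z"
    have z: "0 \<le> t z" "t z \<le> x z" "t z \<le> y z" "x z * y z \<le> m * t z"
      using insert.prems by auto
    have XY: "0 \<le> ?X" "0 \<le> ?Y"
      using x01 y01 by (auto intro!: sum_nonneg)
    have \<alpha>: "1 - ?\<alpha> \<le> ?X" "?X - ?X\<^sup>2 \<le> 1 - ?\<alpha>"
      using prod_one_minus_bounds[OF insert.hyps(1), of x] x01 by auto
    have \<beta>: "1 - ?\<beta> \<le> ?Y" "?Y - ?Y\<^sup>2 \<le> 1 - ?\<beta>"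
      using prod_one_minus_bounds[OF insert.hyps(1), of y] y01 by auto
    have "?\<alpha> \<le> 1"
      using x01 by (auto intro!: prod_le_1)
    then have \<gamma>: "0 \<le> ?\<gamma>" "?\<gamma> \<le> ?\<alpha>" "?\<gamma> \<le> ?\<beta>" "?\<gamma> \<le> 1" "1 - ?X - ?Y \<le> ?\<gamma>"
      using prod_one_minus_Int_bounds[OF insert.hyps(1), of t x y] xyt' by auto
    have IH: "0 \<le> 1 - ?\<alpha> - ?\<beta> + ?\<gamma>" "1 - ?\<alpha> - ?\<beta> + ?\<gamma> \<le> ?T + ?X * ?Y"
      "?T + ?X * ?Y - m * ?T - 2 * (?X + ?Y) * (?T + ?X * ?Y) \<le> 1 - ?\<alpha> - ?\<beta> + ?\<gamma>"
      using insert.IH insert.prems by auto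
    show ?case
      using inclusion_exclusion_step[OF z XY \<alpha> \<beta> \<gamma> IH] insert.hyps by (simp add: algebra_simps)
  qed simp
  have "0 \<le> X" "0 \<le> Y"
    unfolding X_def Y_def using xyt by (auto intro!: sum_nonneg dest!: xyt)
  then have "m * T \<le> m * (T + X * Y)"
    using m by (simp add: mult_left_mono)
  with invariant show "P \<le> T + X * Y" "(T + X * Y) * (1 - m - 2 * (X + Y)) \<le> P"
    by (auto simp: algebra_simps)
qed

lemma triple_product_bounds:
  fixes a b c m :: real
  assumes "0 \<le> a" "a \<le> 1" "a \<le> m" "0 \<le> b" "b \<le> 1" "0 \<le> c" "c \<le> 1"
  shows "0 \<le> a * b * c \<and> a * b * c \<le> a * b \<and> a * b * c \<le> a * c
    \<and> a * b + a * c - a * b * c \<le> 1 \<and> a * b * (a * c) \<le> m * (a * b * c)"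
proof -
  have "a * b + a * c - a * b * c = a * (1 - (1 - b) * (1 - c))"
    by (simp add: algebra_simps)
  also have "\<dots> \<le> 1"
    using assms by (intro mult_le_one) (auto intro: mult_le_one)
  finally have "a * b + a * c - a * b * c \<le> 1" .
  moreover have "a * b * c \<le> a * b"
    using assms by (simp add: mult_left_le)
  moreover have "a * b * c \<le> a * c"
  proof -
    have "a * b * c = a * c * b"
      by (simp add: algebra_simps)
    also have "\<dots> \<le> a * c"
      using assms by (simp add: mult_left_le)
    finally show ?thesis .
  qed
  moreover have "a * b * (a * c) \<le> m * (a * b * c)"
  proof -
    have "a * b * (a * c) = a * (a * b * c)"
      by (simp add: algebra_simps)
    also have "\<dots> \<le> m * (a * b * c)"
      using assms by (intro mult_right_mono) auto
    finally show ?thesis .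
  qed
  ultimately show ?thesis
    using assms by simp
qed

lemma measure_pmf_Int_conv_Compl:
  "measure_pmf.prob M (A \<inter> B)
     = 1 - measure_pmf.prob M (- A) - measure_pmf.prob M (- B) + measure_pmf.prob M (- A \<inter> - B)"
proof -
  have "measure_pmf.prob M (- A \<union> - B)
      = measure_pmf.prob M (- A) + measure_pmf.prob M (- B) - measure_pmf.prob M (- A \<inter> - B)"
    using measure_pmf.finite_measure_Union'[of "- A" M "- B"]
      measure_pmf.finite_measure_Diff'[of "- B" M "- A"] by (simp add: Int_commute)
  moreover have "measure_pmf.prob M (A \<inter> B) = 1 - measure_pmf.prob M (- A \<union> - B)"
    using measure_pmf.prob_compl[of "- A \<union> - B" M] by (simp add: Compl_eq_Diff_UNIV[symmetric])
  ultimately show ?thesis by simp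
qed

lemma measure_pair_pmf_Times:
  "measure_pmf.prob (pair_pmf M N) (A \<times> B) = measure_pmf.prob M A * measure_pmf.prob N B"
proof -
  have "(A \<times> B) \<inter> set_pmf (pair_pmf M N) = (A \<inter> set_pmf M) \<times> (B \<inter> set_pmf N)"
    by auto
  then have "measure_pmf.prob (pair_pmf M N) (A \<times> B)
      = measure_pmf.prob M (A \<inter> set_pmf M) * measure_pmf.prob N (B \<inter> set_pmf N)"
    by (metis measure_Int_set_pmf measure_pmf_prob_product countable_set_pmf countable_Int2)
  then show ?thesis by (simp add: measure_Int_set_pmf)
qed

lemma measure_Pi_pmf_coordinates:
  assumes "finite J" "K \<subseteq> J"
  shows "measure_pmf.prob (Pi_pmf J d p) {f. \<forall>x\<in>K. f x \<in> B x}
       = (\<Prod>x\<in>K. measure_pmf.prob (p x) (B x))"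
proof -
  have "{f. \<forall>x\<in>K. f x \<in> B x} = Pi J (\<lambda>x. if x \<in> K then B x else UNIV)"
    using assms(2) by (auto simp: Pi_def)
  moreover have "J \<inter> K = K"
    using assms(2) by blast
  ultimately show ?thesis
    using assms(1) by (simp add: measure_Pi_pmf_Pi if_distrib prod.inter_restrict[symmetric] cong: if_cong)
qed

lemma measure_Pi_pmf_columns:
  fixes Q :: "'z \<Rightarrow> ('i \<Rightarrow> 'b) \<Rightarrow> bool"
  assumes I: "finite I" and Z: "finite Z"
    and local: "\<And>z g g'. (\<And>i. i \<in> I \<Longrightarrow> g i = g' i) \<Longrightarrow> Q z g = Q z g'"
  shows "measure_pmf.prob (Pi_pmf (I \<times> Z) d p) {f. \<forall>z\<in>Z. Q z (\<lambda>i. f (i, z))}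
       = (\<Prod>z\<in>Z. measure_pmf.prob (Pi_pmf (I \<times> {z}) d p) {f. Q z (\<lambda>i. f (i, z))})"
  using Z
proof (induction rule: finite_induct)
  case empty
  then show ?case by simp
next
  case (insert z Z)
  define glue :: "('i \<times> 'z \<Rightarrow> 'b) \<times> ('i \<times> 'z \<Rightarrow> 'b) \<Rightarrow> 'i \<times> 'z \<Rightarrow> 'b"
    where "glue = (\<lambda>(f, g) x. if x \<in> I \<times> {z} then f x else g x)"
  have "I \<times> insert z Z = I \<times> {z} \<union> I \<times> Z" by auto
  then have split: "Pi_pmf (I \<times> insert z Z) d p
      = map_pmf glue (pair_pmf (Pi_pmf (I \<times> {z}) d p) (Pi_pmf (I \<times> Z) d p))"
    unfolding glue_def using I insert by (auto intro: Pi_pmf_union)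
  have "glue -` {f. \<forall>z'\<in>insert z Z. Q z' (\<lambda>i. f (i, z'))}
      = {f. Q z (\<lambda>i. f (i, z))} \<times> {g. \<forall>z'\<in>Z. Q z' (\<lambda>i. g (i, z'))}"
  proof (intro set_eqI, clarify)
    fix f g
    have "Q z (\<lambda>i. glue (f, g) (i, z)) = Q z (\<lambda>i. f (i, z))"
      by (rule local) (simp add: glue_def)
    moreover have "(\<lambda>i. glue (f, g) (i, z')) = (\<lambda>i. g (i, z'))" if "z' \<in> Z" for z'
      using that insert by (auto simp: glue_def)
    ultimately show "(f, g) \<in> glue -` {f. \<forall>z'\<in>insert z Z. Q z' (\<lambda>i. f (i, z'))}
        \<longleftrightarrow> (f, g) \<in> {f. Q z (\<lambda>i. f (i, z))} \<times> {g. \<forall>z'\<in>Z. Q z' (\<lambda>i. g (i, z'))}"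
      by auto
  qed
  then show ?case
    using insert by (simp add: split measure_pair_pmf_Times)
qed

lemma prob_two_common_neighbours:
  fixes p :: "'i \<times> 'z \<Rightarrow> bool pmf"
  assumes I: "finite I" "u \<in> I" "v \<in> I" "w \<in> I" and Z: "finite Z"
    and distinct: "u \<noteq> v" "u \<noteq> w" "v \<noteq> w"
  defines "q \<equiv> \<lambda>i z. pmf (p (i, z)) True"
  shows "measure_pmf.prob (Pi_pmf (I \<times> Z) d p)
           {f. (\<exists>z\<in>Z. f (u, z) \<and> f (v, z)) \<and> (\<exists>z\<in>Z. f (u, z) \<and> f (w, z))}
       = 1 - (\<Prod>z\<in>Z. 1 - q u z * q v z) - (\<Prod>z\<in>Z. 1 - q u z * q w z)
           + (\<Prod>z\<in>Z. 1 - q u z * q v z - q u z * q w z + q u z * q v z * q w z)"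
proof -
  let ?col = "\<lambda>z. Pi_pmf (I \<times> {z}) d p"
  define both where "both = (\<lambda>i j z. {f :: 'i \<times> 'z \<Rightarrow> bool. f (i, z) \<and> f (j, z)})"
  have col: "measure_pmf.prob (?col z) {f. \<forall>x\<in>S. f x} = (\<Prod>x\<in>S. pmf (p x) True)"
    if "S \<subseteq> I \<times> {z}" for S z
    using measure_Pi_pmf_coordinates[OF _ that, of d p "\<lambda>_. {True}"] I
    by (simp add: measure_pmf_single)
  have both: "measure_pmf.prob (?col z) (both u j z) = q u z * q j z" if "j \<in> I" "j \<noteq> u" for j z
    using col[of "{(u, z), (j, z)}" z] that I by (simp add: both_def q_def)
  have triple: "measure_pmf.prob (?col z) (both u v z \<inter> both u w z) = q u z * q v z * q w z" for z
    using col[of "{(u, z), (v, z), (w, z)}" z] I distinct by (simp add: both_def q_def Int_def conj_ac mult.assoc)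
  have cols: "measure_pmf.prob (Pi_pmf (I \<times> Z) d p) {f. \<forall>z\<in>Z. Q (f (u, z)) (f (v, z)) (f (w, z))}
      = (\<Prod>z\<in>Z. measure_pmf.prob (?col z) {f. Q (f (u, z)) (f (v, z)) (f (w, z))})" for Q
    using measure_Pi_pmf_columns[OF I(1) Z, of "\<lambda>_ g. Q (g u) (g v) (g w)"] I by simp
  have compl: "measure_pmf.prob M (- X) = 1 - measure_pmf.prob M X" for M :: "'a pmf" and X
    using measure_pmf.prob_compl[of X M] by (simp add: Compl_eq_Diff_UNIV)
  have "measure_pmf.prob (Pi_pmf (I \<times> Z) d p) {f. \<forall>z\<in>Z. \<not> (f (u, z) \<and> f (v, z))}
      = (\<Prod>z\<in>Z. 1 - q u z * q v z)"
    using cols[of "\<lambda>a b c. \<not> (a \<and> b)"] compl[of _ "both u v _"] both[of v] I distinct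
    by (simp add: both_def Compl_eq)
  moreover have "measure_pmf.prob (Pi_pmf (I \<times> Z) d p) {f. \<forall>z\<in>Z. \<not> (f (u, z) \<and> f (w, z))}
      = (\<Prod>z\<in>Z. 1 - q u z * q w z)"
    using cols[of "\<lambda>a b c. \<not> (a \<and> c)"] compl[of _ "both u w _"] both[of w] I distinct
    by (simp add: both_def Compl_eq)
  moreover have "measure_pmf.prob (Pi_pmf (I \<times> Z) d p)
      {f. \<forall>z\<in>Z. \<not> (f (u, z) \<and> f (v, z)) \<and> \<not> (f (u, z) \<and> f (w, z))}
      = (\<Prod>z\<in>Z. 1 - q u z * q v z - q u z * q w z + q u z * q v z * q w z)"
  proof -
    have "measure_pmf.prob (?col z) {f. \<not> (f (u, z) \<and> f (v, z)) \<and> \<not> (f (u, z) \<and> f (w, z))}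
        = 1 - q u z * q v z - q u z * q w z + q u z * q v z * q w z" for z
      using measure_pmf_Int_conv_Compl[of "?col z" "- both u v z" "- both u w z"]
        both[of v z] both[of w z] triple[of z] I distinct
      by (simp add: both_def Int_def Compl_eq)
    then show ?thesis
      using cols[of "\<lambda>a b c. \<not> (a \<and> b) \<and> \<not> (a \<and> c)"] by simp
  qed
  ultimately show ?thesis
    using measure_pmf_Int_conv_Compl[of "Pi_pmf (I \<times> Z) d p"
        "{f. \<exists>z\<in>Z. f (u, z) \<and> f (v, z)}" "{f. \<exists>z\<in>Z. f (u, z) \<and> f (w, z)}"]
    by (simp add: Int_def Compl_eq ball_conj_distrib)
qed

lemma prob_both_proj_edges:
  assumes nodes: "u < nL" "v < nL" "w < nL" "u \<noteq> v" "u \<noteq> w" "v \<noteq> w"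
    and nonneg: "\<And>i z. i \<in> {u, v, w} \<Longrightarrow> z < n \<Longrightarrow> 0 \<le> edge_prob n wL wR i z"
  defines "q \<equiv> edge_prob n wL wR"
  shows "measure_pmf.prob (bip_graph nL n wL wR) {Eb. proj_edge n Eb u v \<and> proj_edge n Eb u w}
       = 1 - (\<Prod>z<n. 1 - q u z * q v z) - (\<Prod>z<n. 1 - q u z * q w z)
           + (\<Prod>z<n. 1 - q u z * q v z - q u z * q w z + q u z * q v z * q w z)"
proof -
  define r where "r i z = pmf (bernoulli_pmf (edge_prob n wL wR i z)) True" for i z
  have "{Eb. proj_edge n Eb u v \<and> proj_edge n Eb u w}
      = {f. (\<exists>z\<in>{..<n}. f (u, z) \<and> f (v, z)) \<and> (\<exists>z\<in>{..<n}. f (u, z) \<and> f (w, z))}"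
    using nodes by (auto simp: proj_edge_def)
  then have "measure_pmf.prob (bip_graph nL n wL wR) {Eb. proj_edge n Eb u v \<and> proj_edge n Eb u w}
      = 1 - (\<Prod>z<n. 1 - r u z * r v z) - (\<Prod>z<n. 1 - r u z * r w z)
          + (\<Prod>z<n. 1 - r u z * r v z - r u z * r w z + r u z * r v z * r w z)"
    unfolding bip_graph_def r_def
    using prob_two_common_neighbours[where I = "{..<nL}" and Z = "{..<n}" and d = False
        and p = "\<lambda>(i, z). bernoulli_pmf (edge_prob n wL wR i z)" and u = u and v = v and w = w] nodes
    by simp
  moreover have "r i z = q i z" if "i \<in> {u, v, w}" "z < n" for i z
    using nonneg[OF that] by (simp add: r_def q_def edge_prob_def)
  then have prods: "(\<Prod>z<n. g (r u z) (r v z) (r w z)) = (\<Prod>z<n. g (q u z) (q v z) (q w z))"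
    for g :: "real \<Rightarrow> real \<Rightarrow> real \<Rightarrow> real"
    by (intro prod.cong) auto
  ultimately show ?thesis
    using prods[of "\<lambda>a b c. 1 - a * b"] prods[of "\<lambda>a b c. 1 - a * c"]
      prods[of "\<lambda>a b c. 1 - a * b - a * c + a * b * c"] by simp
qed

lemma moment_pos:
  assumes "0 < n" "\<And>j. j < n \<Longrightarrow> 0 < w j"
  shows "0 < moment n w k"
  using assms unfolding moment_def by (auto intro!: divide_pos_pos sum_pos zero_less_power)

lemma p_proj_eq_sum:
  "p_proj n w x y = (\<Sum>z<n. x * w z / (n * moment n w 1) * (y * w z / (n * moment n w 1)))"
  unfolding p_proj_def moment_def
  by (simp add: sum_distrib_left sum_divide_distrib power2_eq_square field_simps)

lemma sum_triple_products_eq: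
  assumes "0 < n" "x \<noteq> 0" "moment n w 1 \<noteq> 0" "moment n w 2 \<noteq> 0"
  shows "(\<Sum>z<n. x * w z / (n * moment n w 1) * (y * w z / (n * moment n w 1))
                   * (v * w z / (n * moment n w 1)))
       = moment n w 1 * moment n w 3 / (moment n w 2)\<^sup>2 * (1 / x) * p_proj n w x y * p_proj n w x v"
proof -
  define s S2 S3 where "s = (\<Sum>z<n. w z)" and "S2 = (\<Sum>z<n. w z ^ 2)" and "S3 = (\<Sum>z<n. w z ^ 3)"
  have M: "moment n w 1 = s / n" "moment n w 2 = S2 / n" "moment n w 3 = S3 / n"
    unfolding moment_def s_def S2_def S3_def by simp_all
  have "s \<noteq> 0" "S2 \<noteq> 0"
    using assms(3,4) unfolding M by auto
  moreover have "(\<Sum>z<n. x * w z / s * (y * w z / s) * (v * w z / s)) = x * y * v * S3 / s ^ 3"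
    unfolding S3_def sum_distrib_left sum_divide_distrib
    by (intro sum.cong refl) (simp add: power3_eq_cube)
  ultimately show ?thesis
    using assms(1,2) unfolding p_proj_def M
    by (simp add: power2_eq_square power3_eq_cube field_simps)
qed

lemma prob_both_proj_edges_bounds:
  fixes wL wR :: "nat \<Rightarrow> real"
  assumes n: "0 < n"
    and nodes: "u < nL" "v < nL" "w < nL" "u \<noteq> v" "u \<noteq> w" "v \<noteq> w"
    and posL: "\<And>i. i \<in> {u, v, w} \<Longrightarrow> 0 < wL i" and posR: "\<And>z. z < n \<Longrightarrow> 0 < wR z"
    and A1: "\<And>i z. i \<in> {u, v, w} \<Longrightarrow> z < n \<Longrightarrow> wL i * wR z / (n * moment n wR 1) \<le> 1"
    and W: "\<And>i. i \<in> {u, v, w} \<Longrightarrow> wL i \<le> W"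
  defines "P \<equiv> measure_pmf.prob (bip_graph nL n wL wR)
                 {Eb. proj_edge n Eb u v \<and> proj_edge n Eb u w}"
    and "tgt \<equiv> (1 + moment n wR 1 * moment n wR 3 / (moment n wR 2)\<^sup>2 * (1 / wL u))
              * p_proj n wR (wL u) (wL v) * p_proj n wR (wL u) (wL w)"
    and "e \<equiv> W\<^sup>2 * moment n wR 2 / ((moment n wR 1)\<^sup>2 * n)"
  shows "0 < tgt" and "P \<le> tgt" and "tgt * (1 - (sqrt e + 4 * e)) \<le> P"
proof -
  define a where "a i z = wL i * wR z / (n * moment n wR 1)" for i z
  define X Y T where "X = p_proj n wR (wL u) (wL v)" and "Y = p_proj n wR (wL u) (wL w)"
    and "T = (\<Sum>z<n. a u z * a v z * a w z)"
  have M: "0 < moment n wR 1" "0 < moment n wR 2"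
    using moment_pos[OF n posR] by auto
  have posL': "0 < wL u" "0 < wL v" "0 < wL w" and W': "wL u \<le> W" "wL v \<le> W" "wL w \<le> W"
    using posL W by auto
  have a: "0 < a u z" "0 < a v z" "0 < a w z" "a u z \<le> 1" "a v z \<le> 1" "a w z \<le> 1"
    if "z < n" for z
    using posL' posR[OF that] A1[OF _ that] M n unfolding a_def by auto
  have edge: "edge_prob n wL wR i z = a i z" if "i \<in> {u, v, w}" "z < n" for i z
    using A1[OF that] unfolding edge_prob_def a_def by simp
  then have "0 \<le> edge_prob n wL wR i z" if "i \<in> {u, v, w}" "z < n" for i z
    using a[OF that(2)] that by auto
  then have P: "P = 1 - (\<Prod>z<n. 1 - a u z * a v z) - (\<Prod>z<n. 1 - a u z * a w z)
      + (\<Prod>z<n. 1 - a u z * a v z - a u z * a w z + a u z * a v z * a w z)"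
    unfolding P_def using prob_both_proj_edges[OF nodes] edge by simp
  have XY: "X = (\<Sum>z<n. a u z * a v z)" "Y = (\<Sum>z<n. a u z * a w z)"
    unfolding X_def Y_def a_def by (rule p_proj_eq_sum)+
  have tgt: "tgt = T + X * Y"
    unfolding tgt_def T_def X_def Y_def a_def
    using sum_triple_products_eq[of n "wL u" wR "wL v" "wL w"] n posL' M
    by (simp add: distrib_right)
  have "0 < T"
    unfolding T_def using n a by (intro sum_pos) auto
  moreover have "0 < X" "0 < Y"
    unfolding XY using n a by (auto intro!: sum_pos)
  ultimately show "0 < tgt"
    unfolding tgt by (simp add: add_pos_pos)
  have a_le: "a u z \<le> sqrt e" if "z < n" for z
  proof (rule real_le_rsqrt)
    have "wR z ^ 2 \<le> n * moment n wR 2"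
      unfolding moment_def using n that by (auto intro: member_le_sum)
    then have "(wL u * wR z)\<^sup>2 \<le> W\<^sup>2 * (n * moment n wR 2)"
      unfolding power_mult_distrib using posL' W' by (intro mult_mono power_mono) auto
    then show "(a u z)\<^sup>2 \<le> e"
      unfolding a_def e_def using n M by (simp add: power_divide divide_right_mono field_simps power2_eq_square)
  qed
  have "X \<le> e" "Y \<le> e"
    unfolding X_def Y_def p_proj_def e_def using n M posL' W'
    by (auto simp: power2_eq_square field_simps intro!: mult_mono)
  have "0 \<le> a u z * a v z * a w z \<and> a u z * a v z * a w z \<le> a u z * a v z
      \<and> a u z * a v z * a w z \<le> a u z * a w z
      \<and> a u z * a v z + a u z * a w z - a u z * a v z * a w z \<le> 1
      \<and> a u z * a v z * (a u z * a w z) \<le> sqrt e * (a u z * a v z * a w z)" if "z \<in> {..<n}" for z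
    using triple_product_bounds[of "a u z" "sqrt e" "a v z" "a w z"] a[of z] a_le[of z] that by auto
  moreover have "0 \<le> e"
    unfolding e_def using M by simp
  ultimately have "P \<le> T + X * Y" "(T + X * Y) * (1 - sqrt e - 2 * (X + Y)) \<le> P"
    using inclusion_exclusion_product_bounds[where Z = "{..<n}" and m = "sqrt e"
        and x = "\<lambda>z. a u z * a v z" and y = "\<lambda>z. a u z * a w z" and t = "\<lambda>z. a u z * a v z * a w z"]
    unfolding P XY T_def by simp_all
  moreover have "tgt * (1 - (sqrt e + 4 * e)) \<le> tgt * (1 - sqrt e - 2 * (X + Y))"
    using \<open>0 < tgt\<close> \<open>X \<le> e\<close> \<open>Y \<le> e\<close> by (intro mult_left_mono) auto
  ultimately show "P \<le> tgt" "tgt * (1 - (sqrt e + 4 * e)) \<le> P"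
    unfolding tgt by linarith+
qed

lemma asymp_equiv_relative_error:
  fixes f g h :: "'a \<Rightarrow> real"
  assumes bounds: "eventually (\<lambda>k. 0 < g k \<and> f k \<le> g k \<and> g k * (1 - h k) \<le> f k) F"
    and h: "(h \<longlongrightarrow> 0) F"
  shows "f \<sim>[F] g"
proof (rule asymp_equivI')
  from bounds have "eventually (\<lambda>k. 1 - h k \<le> f k / g k) F"
    by eventually_elim (simp add: pos_le_divide_eq mult.commute)
  moreover from bounds have "eventually (\<lambda>k. f k / g k \<le> 1) F"
    by eventually_elim simp
  moreover have "((\<lambda>k. 1 - h k) \<longlongrightarrow> 1) F"
    using tendsto_diff[OF tendsto_const h, of 1] by simp
  ultimately show "((\<lambda>k. f k / g k) \<longlongrightarrow> 1) F"
    by (rule tendsto_sandwich[OF _ _ _ tendsto_const])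
qed

lemma relative_error_tendsto_0:
  fixes n :: "'a \<Rightarrow> nat" and W M1 M2 :: "'a \<Rightarrow> real"
  assumes \<delta>: "0 < \<delta>" and n: "filterlim n at_top F"
    and W: "W \<in> O[F](\<lambda>k. real (n k) powr (1/2 - \<delta>))" and M2: "M2 \<in> O[F](\<lambda>k. (M1 k)\<^sup>2)"
    and M1: "eventually (\<lambda>k. M1 k \<noteq> 0) F"
  shows "((\<lambda>k. (W k)\<^sup>2 * M2 k / ((M1 k)\<^sup>2 * real (n k))) \<longlongrightarrow> 0) F"
proof -
  have n_real: "filterlim (\<lambda>k. real (n k)) at_top F"
    using filterlim_compose[OF filterlim_real_sequentially n] .
  then have n_pos: "eventually (\<lambda>k. 0 < real (n k)) F"
    unfolding filterlim_at_top_dense by blast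
  have nonzero: "eventually (\<lambda>k. (M1 k)\<^sup>2 * real (n k) \<noteq> 0) F"
    using M1 n_pos by eventually_elim simp
  have "(\<lambda>k. (W k)\<^sup>2 * M2 k / ((M1 k)\<^sup>2 * real (n k)))
      \<in> O[F](\<lambda>k. (real (n k) powr (1/2 - \<delta>))\<^sup>2 * (M1 k)\<^sup>2 / ((M1 k)\<^sup>2 * real (n k)))"
    by (intro landau_o.big.divide_right nonzero landau_o.big.mult landau_o.big_power W M2)
  also have "(\<lambda>k. (real (n k) powr (1/2 - \<delta>))\<^sup>2 * (M1 k)\<^sup>2 / ((M1 k)\<^sup>2 * real (n k)))
      \<in> \<Theta>[F](\<lambda>k. real (n k) powr (- 2 * \<delta>))"
  proof (rule bigthetaI_cong)
    show "eventually (\<lambda>k. (real (n k) powr (1/2 - \<delta>))\<^sup>2 * (M1 k)\<^sup>2 / ((M1 k)\<^sup>2 * real (n k))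
        = real (n k) powr (- 2 * \<delta>)) F"
      using M1 n_pos
    proof eventually_elim
      case (elim k)
      have "(real (n k) powr (1/2 - \<delta>))\<^sup>2 = real (n k) powr 1 * real (n k) powr (- 2 * \<delta>)"
        unfolding power2_eq_square powr_add[symmetric] by simp
      with elim show ?case
        by simp
    qed
  qed
  also have "(\<lambda>k. real (n k) powr (- 2 * \<delta>)) \<in> o[F](\<lambda>_. 1)"
    by (rule smalloI_tendsto) (use tendsto_neg_powr[OF _ n_real, of "- 2 * \<delta>"] \<delta> in simp_all)
  finally have "(\<lambda>k. (W k)\<^sup>2 * M2 k / ((M1 k)\<^sup>2 * real (n k))) \<in> o[F](\<lambda>_. 1)" .
  from smalloD_tendsto[OF this] show ?thesis
    by (simp only: div_by_1)
qed

theorem mainTheorem7: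
  fixes nL nR :: "nat \<Rightarrow> nat" and wL wR :: "nat \<Rightarrow> nat \<Rightarrow> real"
    and \<delta> :: real and u u1 u2 :: "nat \<Rightarrow> nat"
  assumes delta: "\<delta> > 1/10"
    and nL_lim: "filterlim nL at_top sequentially"
    and nR_lim: "filterlim nR at_top sequentially"
    and posL: "\<forall>k i. i < nL k \<longrightarrow> wL k i > 0"
    and posR: "\<forall>k j. j < nR k \<longrightarrow> wR k j > 0"
    and A1: "\<forall>k i j. i < nL k \<longrightarrow> j < nR k \<longrightarrow>
               wL k i * wR k j / (real (nR k) * moment (nR k) (wR k) 1) \<le> 1"
    and A2_max: "(\<lambda>k. Max (wL k ` {..<nL k} \<union> wR k ` {..<nR k}))
                   \<in> O(\<lambda>k. real (nR k) powr (1/2 - \<delta>))"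
    and A2_min: "(\<lambda>k. Min (wL k ` {..<nL k})) \<in> \<Omega>(\<lambda>k. 1)"
    and A2_M2: "(\<lambda>k. moment (nR k) (wR k) 2) \<in> O(\<lambda>k. (moment (nR k) (wR k) 1)^2)"
    and A2_M4: "(\<lambda>k. moment (nR k) (wR k) 4) \<in> O(\<lambda>k. real (nR k) powr (1 - 2*\<delta>))"
    and nodes: "eventually (\<lambda>k. u k < nL k \<and> u1 k < nL k \<and> u2 k < nL k \<and>
                  u k \<noteq> u1 k \<and> u k \<noteq> u2 k \<and> u1 k \<noteq> u2 k) sequentially"
  shows "(\<lambda>k. measure_pmf.prob (bip_graph (nL k) (nR k) (wL k) (wR k))
              {Eb. proj_edge (nR k) Eb (u k) (u1 k) \<and> proj_edge (nR k) Eb (u k) (u2 k)})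
         \<sim>[sequentially]
         (\<lambda>k. (1 + moment (nR k) (wR k) 1 * moment (nR k) (wR k) 3 / (moment (nR k) (wR k) 2)^2
                   * (1 / wL k (u k)))
              * p_proj (nR k) (wR k) (wL k (u k)) (wL k (u1 k))
              * p_proj (nR k) (wR k) (wL k (u k)) (wL k (u2 k)))"
proof -
  define P where "P k = measure_pmf.prob (bip_graph (nL k) (nR k) (wL k) (wR k))
    {Eb. proj_edge (nR k) Eb (u k) (u1 k) \<and> proj_edge (nR k) Eb (u k) (u2 k)}" for k
  define tgt where "tgt k = (1 + moment (nR k) (wR k) 1 * moment (nR k) (wR k) 3
      / (moment (nR k) (wR k) 2)\<^sup>2 * (1 / wL k (u k)))
    * p_proj (nR k) (wR k) (wL k (u k)) (wL k (u1 k)) * p_proj (nR k) (wR k) (wL k (u k)) (wL k (u2 k))"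
    for k
  define W where "W k = Max (wL k ` {..<nL k} \<union> wR k ` {..<nR k})" for k
  define e where "e k = (W k)\<^sup>2 * moment (nR k) (wR k) 2 / ((moment (nR k) (wR k) 1)\<^sup>2 * real (nR k))"
    for k
  have "eventually (\<lambda>k. 1 \<le> nR k) sequentially"
    using nR_lim unfolding filterlim_at_top by blast
  then have nR_pos: "eventually (\<lambda>k. 0 < nR k) sequentially"
    by (rule eventually_mono) simp
  then have "eventually (\<lambda>k. 0 < moment (nR k) (wR k) 1) sequentially"
    by (rule eventually_mono) (rule moment_pos, use posR in auto)
  then have "eventually (\<lambda>k. moment (nR k) (wR k) 1 \<noteq> 0) sequentially"
    by (rule eventually_mono) simp
  then have "(e \<longlongrightarrow> 0) sequentially"
    unfolding e_def W_def using delta nR_lim A2_max A2_M2 by (intro relative_error_tendsto_0) auto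
  then have "((\<lambda>k. sqrt (e k) + 4 * e k) \<longlongrightarrow> 0) sequentially"
    by (auto intro!: tendsto_eq_intros)
  moreover have "eventually (\<lambda>k. 0 < tgt k \<and> P k \<le> tgt k \<and> tgt k * (1 - (sqrt (e k) + 4 * e k)) \<le> P k)
    sequentially"
    using nodes nR_pos
  proof eventually_elim
    case (elim k)
    then have nodes_k: "u k < nL k" "u1 k < nL k" "u2 k < nL k" "u k \<noteq> u1 k" "u k \<noteq> u2 k" "u1 k \<noteq> u2 k"
      by simp_all
    then have L: "i < nL k" if "i \<in> {u k, u1 k, u2 k}" for i
      using that by auto
    have posL_k: "0 < wL k i" if "i \<in> {u k, u1 k, u2 k}" for i
      using L[OF that] posL by blast
    have W_k: "wL k i \<le> W k" if "i \<in> {u k, u1 k, u2 k}" for i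
      unfolding W_def using L[OF that] by (intro Max_ge) auto
    have A1_k: "wL k i * wR k z / (nR k * moment (nR k) (wR k) 1) \<le> 1"
      if "i \<in> {u k, u1 k, u2 k}" "z < nR k" for i z
      using L[OF that(1)] that(2) A1 by blast
    have posR_k: "0 < wR k z" if "z < nR k" for z
      using that posR by blast
    note bounds = prob_both_proj_edges_bounds[OF \<open>0 < nR k\<close> nodes_k posL_k posR_k A1_k W_k]
    show ?case
      unfolding P_def tgt_def e_def by (intro conjI bounds)
  qed
  ultimately have "P \<sim>[sequentially] tgt"
    by (intro asymp_equiv_relative_error)
  then show ?thesis
    unfolding P_def tgt_def .
qed

end
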